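(* Let $(\mathbf C,I)$ be a finite-type based chain complex and let $M=\{\alpha\to\beta\}$ be a single $(n+1,n)$-pairing (so $\alpha\in I_{n+1}$, $\beta\in I_n$ and $\partial_{\beta,\alpha}$ is an isomorphism). Then $\operatorname{Im}\partial_n^M=\operatorname{Im}\partial_n$, where $\partial^M$ is the boundary of the Morse complex $\mathbf C^M$ (note $\mathbf C^M_{n-1}=\mathbf C_{n-1}$).
   Context: Based chain complex: chain complex $(\mathbf C,\partial)$ of finite-dimensional real vector spaces with disjoint finite index sets $I_n$ and $\mathbf C_n=\bigoplus_{\alpha\in I_n}C_\alpha$; $\partial_{\tau,\sigma}=\pi_\tau\partial i_\sigma:C_\sigma\to C_\tau$. For the single pairing $M=\{\alpha\to\beta\}$, the Morse complex $\mathbf C^M$ has summands $C_\sigma$ for $\sigma\in I\setminus\{\alpha,\beta\}$ and boundary components $\partial^M_{\tau,\sigma}=\partial_{\tau,\sigma}-\partial_{\tau,\alpha}\partial_{\beta,\alpha}^{-1}\partial_{\beta,\sigma}$. *)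

theory Defs
  imports Complex_Main
begin

text \<open>
Index set I (elements of I_n are the sigma in I with deg sigma = n); each summand C_sigma is a
finite-dimensional real vector space, identified with R^(dm sigma) via a basis; a vector of
C_sigma is a function nat => real vanishing at k >= dm sigma.  The component
partial_{tau,sigma} : C_sigma -> C_tau is the (dm tau x dm sigma) real matrix D tau sigma
(entries D tau sigma j k, j < dm tau, k < dm sigma).
\<close>

definition chains :: "'i set \<Rightarrow> ('i \<Rightarrow> int) \<Rightarrow> ('i \<Rightarrow> nat) \<Rightarrow> int \<Rightarrow> ('i \<Rightarrow> nat \<Rightarrow> real) set" where
  "chains S deg dm n =
     {x. \<forall>\<sigma> k. x \<sigma> k \<noteq> 0 \<longrightarrow> \<sigma> \<in> S \<and> deg \<sigma> = n \<and> k < dm \<sigma>}"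

definition bd :: "'i set \<Rightarrow> ('i \<Rightarrow> int) \<Rightarrow> ('i \<Rightarrow> nat) \<Rightarrow> ('i \<Rightarrow> 'i \<Rightarrow> nat \<Rightarrow> nat \<Rightarrow> real)
                   \<Rightarrow> ('i \<Rightarrow> nat \<Rightarrow> real) \<Rightarrow> ('i \<Rightarrow> nat \<Rightarrow> real)" where
  "bd S deg dm D x = (\<lambda>\<tau> j. if \<tau> \<in> S \<and> j < dm \<tau> then
      (\<Sum>\<sigma>\<in>{\<sigma>\<in>S. deg \<sigma> = deg \<tau> + 1}. \<Sum>k<dm \<sigma>. D \<tau> \<sigma> j k * x \<sigma> k) else 0)"

definition based_chain_complex ::
  "'i set \<Rightarrow> ('i \<Rightarrow> int) \<Rightarrow> ('i \<Rightarrow> nat) \<Rightarrow> ('i \<Rightarrow> 'i \<Rightarrow> nat \<Rightarrow> nat \<Rightarrow> real) \<Rightarrow> bool" where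
  "based_chain_complex I deg dm D \<longleftrightarrow>
     (\<forall>\<tau> \<sigma>. deg \<tau> + 1 \<noteq> deg \<sigma> \<longrightarrow> D \<tau> \<sigma> = (\<lambda>_ _. 0)) \<and>
     (\<forall>\<rho>\<in>I. \<forall>\<tau>\<in>I. \<forall>j<dm \<rho>. \<forall>k<dm \<tau>.
        (\<Sum>\<sigma>\<in>{\<sigma>\<in>I. deg \<sigma> = deg \<rho> + 1}. \<Sum>l<dm \<sigma>. D \<rho> \<sigma> j l * D \<sigma> \<tau> l k) = 0)"

definition finite_type :: "'i set \<Rightarrow> ('i \<Rightarrow> int) \<Rightarrow> bool" where
  "finite_type I deg \<longleftrightarrow> (\<forall>n. finite {\<sigma>\<in>I. deg \<sigma> = n})"

definition is_inverse_block :: "nat \<Rightarrow> nat \<Rightarrow> (nat \<Rightarrow> nat \<Rightarrow> real) \<Rightarrow> (nat \<Rightarrow> nat \<Rightarrow> real) \<Rightarrow> bool" where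
  "is_inverse_block da db A E \<longleftrightarrow>
     (\<forall>i<da. \<forall>k<da. (\<Sum>m<db. E i m * A m k) = (if i = k then 1 else 0)) \<and>
     (\<forall>i<db. \<forall>k<db. (\<Sum>m<da. A i m * E m k) = (if i = k then 1 else 0))"

definition is_iso_block :: "nat \<Rightarrow> nat \<Rightarrow> (nat \<Rightarrow> nat \<Rightarrow> real) \<Rightarrow> bool" where
  "is_iso_block da db A \<longleftrightarrow> (\<exists>E. is_inverse_block da db A E)"

definition is_pairing ::
  "'i set \<Rightarrow> ('i \<Rightarrow> int) \<Rightarrow> ('i \<Rightarrow> nat) \<Rightarrow> ('i \<Rightarrow> 'i \<Rightarrow> nat \<Rightarrow> nat \<Rightarrow> real) \<Rightarrow> int \<Rightarrow> 'i \<Rightarrow> 'i \<Rightarrow> bool" where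
  "is_pairing I deg dm D n \<alpha> \<beta> \<longleftrightarrow>
     \<alpha> \<in> I \<and> \<beta> \<in> I \<and> deg \<alpha> = n + 1 \<and> deg \<beta> = n \<and> is_iso_block (dm \<alpha>) (dm \<beta>) (D \<beta> \<alpha>)"

definition block_inv :: "nat \<Rightarrow> nat \<Rightarrow> (nat \<Rightarrow> nat \<Rightarrow> real) \<Rightarrow> (nat \<Rightarrow> nat \<Rightarrow> real)" where
  "block_inv da db A = (SOME E. is_inverse_block da db A E)"

definition morse_D ::
  "('i \<Rightarrow> nat) \<Rightarrow> ('i \<Rightarrow> 'i \<Rightarrow> nat \<Rightarrow> nat \<Rightarrow> real) \<Rightarrow> 'i \<Rightarrow> 'i \<Rightarrow> ('i \<Rightarrow> 'i \<Rightarrow> nat \<Rightarrow> nat \<Rightarrow> real)" where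
  "morse_D dm D \<alpha> \<beta> = (\<lambda>\<tau> \<sigma> j k. D \<tau> \<sigma> j k -
     (\<Sum>l<dm \<alpha>. \<Sum>m<dm \<beta>.
        D \<tau> \<alpha> j l * block_inv (dm \<alpha>) (dm \<beta>) (D \<beta> \<alpha>) l m * D \<beta> \<sigma> m k))"

end

theory Submission
  imports Defs
begin

(* For an n-chain x avoiding alpha and beta, the Morse correction term
   D_{tau,alpha} D_{beta,alpha}^-1 D_{beta,sigma} only matters for targets tau of degree n - 1,
   where D_{tau,alpha} = 0 because deg alpha = n + 1; so the Morse boundary of x is its
   ordinary boundary.  Conversely, an arbitrary n-chain x has the same boundary as
   x - bd a, where a is D_{beta,alpha}^-1 x_beta placed on the summand alpha (bd bd = 0),
   and that chain has no beta-component; its alpha-component vanishes for degree reasons. *)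

lemma chains_mono: "S \<subseteq> T \<Longrightarrow> chains S deg dm n \<subseteq> chains T deg dm n"
  unfolding chains_def by blast

lemma chains_diff:
  assumes "x \<in> chains S deg dm n" "y \<in> chains S deg dm n"
  shows "x - y \<in> chains S deg dm n"
proof -
  have "x \<sigma> k \<noteq> 0 \<or> y \<sigma> k \<noteq> 0" if "(x - y) \<sigma> k \<noteq> 0" for \<sigma> k
    using that by auto
  then show ?thesis
    using assms unfolding chains_def by blast
qed

lemma chains_Diff_other_degree:
  "deg \<alpha> \<noteq> n \<Longrightarrow> chains (S - {\<alpha>}) deg dm n = chains S deg dm n"
  unfolding chains_def by blast

lemma bd_diff: "bd S deg dm D (x - y) = bd S deg dm D x - bd S deg dm D y"
  unfolding bd_def by (simp add: fun_eq_iff right_diff_distrib sum_subtractf)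

lemma bd_outside_index: "\<tau> \<notin> S \<Longrightarrow> bd S deg dm D x \<tau> = (\<lambda>_. 0)"
  unfolding bd_def by simp

lemma bd_vanishes_off_degree:
  assumes "x \<in> chains S deg dm n" "deg \<tau> + 1 \<noteq> n"
  shows "bd S deg dm D x \<tau> = (\<lambda>_. 0)"
proof
  fix j
  have "x \<sigma> k = 0" if "deg \<sigma> = deg \<tau> + 1" for \<sigma> k
  proof (rule ccontr)
    assume "x \<sigma> k \<noteq> 0"
    then have "deg \<sigma> = n"
      using assms(1) unfolding chains_def by blast
    with assms(2) that show False
      by simp
  qed
  then show "bd S deg dm D x \<tau> j = 0"
    unfolding bd_def by (auto intro!: sum.neutral)
qed

lemma bd_in_chains:
  assumes "x \<in> chains S deg dm (n + 1)"
  shows "bd S deg dm D x \<in> chains S deg dm n"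
  unfolding chains_def
proof (intro CollectI allI impI)
  fix \<tau> j
  assume nz: "bd S deg dm D x \<tau> j \<noteq> 0"
  have "deg \<tau> = n"
  proof (rule ccontr)
    assume "deg \<tau> \<noteq> n"
    then have "bd S deg dm D x \<tau> = (\<lambda>_. 0)"
      using assms by (intro bd_vanishes_off_degree) auto
    with nz show False
      by simp
  qed
  with nz show "\<tau> \<in> S \<and> deg \<tau> = n \<and> j < dm \<tau>"
    unfolding bd_def by (simp split: if_splits)
qed

lemma sum_swap_nested:
  "(\<Sum>\<sigma>\<in>A. \<Sum>k\<in>B \<sigma>. \<Sum>\<rho>\<in>C. \<Sum>l\<in>E \<rho>. f \<sigma> k \<rho> l)
     = (\<Sum>\<rho>\<in>C. \<Sum>l\<in>E \<rho>. \<Sum>\<sigma>\<in>A. \<Sum>k\<in>B \<sigma>. f \<sigma> k \<rho> l)"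
proof -
  have "(\<Sum>\<sigma>\<in>A. \<Sum>k\<in>B \<sigma>. \<Sum>\<rho>\<in>C. \<Sum>l\<in>E \<rho>. f \<sigma> k \<rho> l)
      = (\<Sum>\<sigma>\<in>A. \<Sum>\<rho>\<in>C. \<Sum>k\<in>B \<sigma>. \<Sum>l\<in>E \<rho>. f \<sigma> k \<rho> l)"
    by (rule sum.cong[OF refl], rule sum.swap)
  also have "\<dots> = (\<Sum>\<rho>\<in>C. \<Sum>\<sigma>\<in>A. \<Sum>l\<in>E \<rho>. \<Sum>k\<in>B \<sigma>. f \<sigma> k \<rho> l)"
    by (subst sum.swap) (intro sum.cong refl sum.swap)
  also have "\<dots> = (\<Sum>\<rho>\<in>C. \<Sum>l\<in>E \<rho>. \<Sum>\<sigma>\<in>A. \<Sum>k\<in>B \<sigma>. f \<sigma> k \<rho> l)"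
    by (rule sum.cong[OF refl], rule sum.swap)
  finally show ?thesis .
qed

lemma bd_bd:
  assumes "based_chain_complex I deg dm D"
  shows "bd I deg dm D (bd I deg dm D x) = (\<lambda>_ _. 0)"
proof (intro ext)
  fix \<tau> j
  let ?S = "\<lambda>m. {\<sigma>\<in>I. deg \<sigma> = m}"
  show "bd I deg dm D (bd I deg dm D x) \<tau> j = 0"
  proof (cases "\<tau> \<in> I \<and> j < dm \<tau>")
    case True
    have "bd I deg dm D (bd I deg dm D x) \<tau> j
        = (\<Sum>\<sigma>\<in>?S (deg \<tau> + 1). \<Sum>k<dm \<sigma>.
             D \<tau> \<sigma> j k * (\<Sum>\<rho>\<in>?S (deg \<tau> + 1 + 1). \<Sum>l<dm \<rho>. D \<sigma> \<rho> k l * x \<rho> l))"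
      using True unfolding bd_def by (auto intro!: sum.cong)
    also have "\<dots> = (\<Sum>\<rho>\<in>?S (deg \<tau> + 1 + 1). \<Sum>l<dm \<rho>.
             (\<Sum>\<sigma>\<in>?S (deg \<tau> + 1). \<Sum>k<dm \<sigma>. D \<tau> \<sigma> j k * D \<sigma> \<rho> k l) * x \<rho> l)"
      unfolding sum_distrib_left sum_distrib_right mult.assoc by (rule sum_swap_nested)
    also have "\<dots> = 0"
      using assms True unfolding based_chain_complex_def by simp
    finally show ?thesis by simp
  next
    case False
    then show ?thesis
      by (simp only: bd_def if_False)
  qed
qed

lemma bd_single_summand:
  assumes "finite {\<sigma>\<in>S. deg \<sigma> = deg \<alpha>}"
  shows "bd S deg dm D (\<lambda>\<sigma>. if \<sigma> = \<alpha> then v else (\<lambda>_. 0)) \<tau> j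
       = (if \<tau> \<in> S \<and> j < dm \<tau> \<and> \<alpha> \<in> S \<and> deg \<alpha> = deg \<tau> + 1
          then \<Sum>k<dm \<alpha>. D \<tau> \<alpha> j k * v k else 0)"
proof -
  have "(\<Sum>k<dm \<sigma>. D \<tau> \<sigma> j k * (if \<sigma> = \<alpha> then v else (\<lambda>_. 0)) k)
      = (if \<sigma> = \<alpha> then \<Sum>k<dm \<alpha>. D \<tau> \<alpha> j k * v k else 0)" for \<sigma>
    by simp
  then show ?thesis
    using assms unfolding bd_def by (auto cong: sum.cong intro!: sum.neutral)
qed

lemma bd_subset_eq_on_chains:
  assumes "finite_type I deg" "S \<subseteq> I" "x \<in> chains S deg dm n" "\<tau> \<in> S"
  shows "bd S deg dm D x \<tau> = bd I deg dm D x \<tau>"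
proof
  fix j
  have "(\<Sum>\<sigma>\<in>{\<sigma>\<in>S. deg \<sigma> = deg \<tau> + 1}. \<Sum>k<dm \<sigma>. D \<tau> \<sigma> j k * x \<sigma> k)
      = (\<Sum>\<sigma>\<in>{\<sigma>\<in>I. deg \<sigma> = deg \<tau> + 1}. \<Sum>k<dm \<sigma>. D \<tau> \<sigma> j k * x \<sigma> k)"
  proof (rule sum.mono_neutral_left)
    show "finite {\<sigma>\<in>I. deg \<sigma> = deg \<tau> + 1}"
      using assms(1) unfolding finite_type_def by blast
    show "\<forall>\<sigma>\<in>{\<sigma>\<in>I. deg \<sigma> = deg \<tau> + 1} - {\<sigma>\<in>S. deg \<sigma> = deg \<tau> + 1}.
            (\<Sum>k<dm \<sigma>. D \<tau> \<sigma> j k * x \<sigma> k) = 0"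
      using assms(3) unfolding chains_def by (auto intro!: sum.neutral)
  qed (use assms(2) in blast)
  then show "bd S deg dm D x \<tau> j = bd I deg dm D x \<tau> j"
    using assms(2,4) unfolding bd_def by auto
qed

lemma bd_morse_eq_bd:
  assumes bc: "based_chain_complex I deg dm D" and fin: "finite_type I deg"
    and deg_\<alpha>: "deg \<alpha> = n + 1" and deg_\<beta>: "deg \<beta> = n"
    and x: "x \<in> chains (I - {\<alpha>, \<beta>}) deg dm n"
  shows "bd (I - {\<alpha>, \<beta>}) deg dm (morse_D dm D \<alpha> \<beta>) x = bd I deg dm D x"
proof
  fix \<tau>
  show "bd (I - {\<alpha>, \<beta>}) deg dm (morse_D dm D \<alpha> \<beta>) x \<tau> = bd I deg dm D x \<tau>"
  proof (cases "\<tau> \<in> I \<and> deg \<tau> + 1 = n")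
    case True
    have "D \<tau> \<alpha> = (\<lambda>_ _. 0)"
      using bc True deg_\<alpha> unfolding based_chain_complex_def by auto
    then have morse_D_\<tau>: "morse_D dm D \<alpha> \<beta> \<tau> \<sigma> j k = D \<tau> \<sigma> j k" for \<sigma> j k
      unfolding morse_D_def by simp
    have "bd (I - {\<alpha>, \<beta>}) deg dm (morse_D dm D \<alpha> \<beta>) x \<tau> = bd (I - {\<alpha>, \<beta>}) deg dm D x \<tau>"
      unfolding bd_def morse_D_\<tau> ..
    also have "\<dots> = bd I deg dm D x \<tau>"
      using True deg_\<alpha> deg_\<beta> by (intro bd_subset_eq_on_chains[OF fin _ x]) auto
    finally show ?thesis .
  next
    case False
    have vanish: "bd S deg dm D' x \<tau> = (\<lambda>_. 0)" if "S \<subseteq> I" "x \<in> chains S deg dm n" for S D'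
    proof (cases "\<tau> \<in> S")
      case True
      with False that have "deg \<tau> + 1 \<noteq> n"
        by blast
      with that(2) show ?thesis
        by (rule bd_vanishes_off_degree)
    qed (rule bd_outside_index)
    have "x \<in> chains I deg dm n"
      using x chains_mono[of "I - {\<alpha>, \<beta>}" I] by blast
    then show ?thesis
      using x vanish[of "I - {\<alpha>, \<beta>}"] vanish[of I] by simp
  qed
qed

lemma bd_lift_through_right_inverse:
  assumes fin: "finite {\<sigma>\<in>S. deg \<sigma> = deg \<alpha>}"
    and \<alpha>: "\<alpha> \<in> S" and deg_\<alpha>: "deg \<alpha> = deg \<beta> + 1"
    and right_inv: "\<And>i k. i < dm \<beta> \<Longrightarrow> k < dm \<beta> \<Longrightarrow>
                      (\<Sum>m<dm \<alpha>. D \<beta> \<alpha> i m * E m k) = (if i = k then 1 else 0)"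
    and \<beta>: "\<beta> \<in> S" and l: "l < dm \<beta>"
    and v: "\<And>k. k < dm \<alpha> \<Longrightarrow> v k = (\<Sum>m<dm \<beta>. E k m * w m)"
  shows "bd S deg dm D (\<lambda>\<sigma>. if \<sigma> = \<alpha> then v else (\<lambda>_. 0)) \<beta> l = w l"
proof -
  have "bd S deg dm D (\<lambda>\<sigma>. if \<sigma> = \<alpha> then v else (\<lambda>_. 0)) \<beta> l = (\<Sum>k<dm \<alpha>. D \<beta> \<alpha> l k * v k)"
    using bd_single_summand[OF fin] \<alpha> \<beta> deg_\<alpha> l by simp
  also have "\<dots> = (\<Sum>k<dm \<alpha>. \<Sum>m<dm \<beta>. D \<beta> \<alpha> l k * E k m * w m)"
    using v by (simp add: sum_distrib_left mult.assoc)
  also have "\<dots> = (\<Sum>m<dm \<beta>. (\<Sum>k<dm \<alpha>. D \<beta> \<alpha> l k * E k m) * w m)"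
    by (subst sum.swap) (simp add: sum_distrib_right)
  also have "\<dots> = (\<Sum>m<dm \<beta>. if l = m then w m else 0)"
    using right_inv l by (intro sum.cong) auto
  also have "\<dots> = w l"
    using l by simp
  finally show ?thesis .
qed

lemma chain_avoiding_with_same_bd:
  assumes bc: "based_chain_complex I deg dm D"
    and fin: "finite {\<sigma>\<in>I. deg \<sigma> = deg \<alpha>}"
    and \<alpha>: "\<alpha> \<in> I" and deg_\<alpha>: "deg \<alpha> = deg \<beta> + 1"
    and right_inv: "\<And>i k. i < dm \<beta> \<Longrightarrow> k < dm \<beta> \<Longrightarrow>
                      (\<Sum>m<dm \<alpha>. D \<beta> \<alpha> i m * E m k) = (if i = k then 1 else 0)"
    and x: "x \<in> chains I deg dm (deg \<beta>)"
  obtains x' where "x' \<in> chains (I - {\<beta>}) deg dm (deg \<beta>)" "bd I deg dm D x' = bd I deg dm D x"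
proof -
  define v where "v k = (if k < dm \<alpha> then \<Sum>m<dm \<beta>. E k m * x \<beta> m else 0)" for k
  define a where "a = (\<lambda>\<sigma>. if \<sigma> = \<alpha> then v else (\<lambda>_. 0))"
  define x' where "x' = x - bd I deg dm D a"
  have a: "a \<in> chains I deg dm (deg \<beta> + 1)"
    using \<alpha> deg_\<alpha> by (simp add: chains_def a_def v_def)
  have bd_a_\<beta>: "bd I deg dm D a \<beta> l = x \<beta> l" for l
  proof (cases "\<beta> \<in> I \<and> l < dm \<beta>")
    case True
    then show ?thesis
      unfolding a_def using v_def
      by (intro bd_lift_through_right_inverse[of I deg \<alpha> \<beta> dm D E, OF fin \<alpha> deg_\<alpha> right_inv]) auto
  next
    case False
    then show ?thesis
      using x unfolding bd_def chains_def by auto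
  qed
  have "x' \<in> chains I deg dm (deg \<beta>)"
    unfolding x'_def using x a by (intro chains_diff bd_in_chains)
  then have "x' \<in> chains (I - {\<beta>}) deg dm (deg \<beta>)"
    using bd_a_\<beta> unfolding chains_def x'_def by auto
  moreover have "bd I deg dm D x' = bd I deg dm D x"
    unfolding x'_def bd_diff bd_bd[OF bc] by (simp add: fun_eq_iff)
  ultimately show ?thesis
    using that by blast
qed

lemma bd_image_chains_Diff_pairing:
  assumes bc: "based_chain_complex I deg dm D" and fin: "finite_type I deg"
    and pairing: "is_pairing I deg dm D n \<alpha> \<beta>"
  shows "bd I deg dm D ` chains (I - {\<alpha>, \<beta>}) deg dm n = bd I deg dm D ` chains I deg dm n"
proof
  show "bd I deg dm D ` chains (I - {\<alpha>, \<beta>}) deg dm n \<subseteq> bd I deg dm D ` chains I deg dm n"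
    by (intro image_mono chains_mono) blast
  obtain E where \<alpha>: "\<alpha> \<in> I" and deg_\<alpha>: "deg \<alpha> = n + 1" and deg_\<beta>: "deg \<beta> = n"
    and inv: "is_inverse_block (dm \<alpha>) (dm \<beta>) (D \<beta> \<alpha>) E"
    using pairing unfolding is_pairing_def is_iso_block_def by blast
  have right_inv: "\<And>i k. i < dm \<beta> \<Longrightarrow> k < dm \<beta> \<Longrightarrow>
      (\<Sum>m<dm \<alpha>. D \<beta> \<alpha> i m * E m k) = (if i = k then 1 else 0)"
    using inv unfolding is_inverse_block_def by blast
  have fin_\<alpha>: "finite {\<sigma>\<in>I. deg \<sigma> = deg \<alpha>}"
    using fin unfolding finite_type_def by blast
  have "I - {\<alpha>, \<beta>} = I - {\<beta>} - {\<alpha>}"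
    by blast
  then have chains_eq: "chains (I - {\<alpha>, \<beta>}) deg dm n = chains (I - {\<beta>}) deg dm n"
    using chains_Diff_other_degree[of deg \<alpha> n "I - {\<beta>}" dm] deg_\<alpha> by simp
  show "bd I deg dm D ` chains I deg dm n \<subseteq> bd I deg dm D ` chains (I - {\<alpha>, \<beta>}) deg dm n"
  proof
    fix y
    assume "y \<in> bd I deg dm D ` chains I deg dm n"
    then obtain x where x: "x \<in> chains I deg dm (deg \<beta>)" and y: "y = bd I deg dm D x"
      using deg_\<beta> by blast
    obtain x' where "x' \<in> chains (I - {\<beta>}) deg dm (deg \<beta>)" "bd I deg dm D x' = bd I deg dm D x"
      using chain_avoiding_with_same_bd[OF bc fin_\<alpha> \<alpha> _ right_inv x] deg_\<alpha> deg_\<beta> by auto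
    then show "y \<in> bd I deg dm D ` chains (I - {\<alpha>, \<beta>}) deg dm n"
      using chains_eq deg_\<beta> y by (metis image_eqI)
  qed
qed

theorem mainTheorem13:
  fixes I :: "'i set" and deg :: "'i \<Rightarrow> int" and dm :: "'i \<Rightarrow> nat"
    and D :: "'i \<Rightarrow> 'i \<Rightarrow> nat \<Rightarrow> nat \<Rightarrow> real" and n :: int and \<alpha> \<beta> :: 'i
  assumes "based_chain_complex I deg dm D"
    and "finite_type I deg"
    and "is_pairing I deg dm D n \<alpha> \<beta>"
  shows "bd (I - {\<alpha>, \<beta>}) deg dm (morse_D dm D \<alpha> \<beta>) ` chains (I - {\<alpha>, \<beta>}) deg dm n
         = bd I deg dm D ` chains I deg dm n"
proof -
  have degs: "deg \<alpha> = n + 1" "deg \<beta> = n"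
    using assms(3) unfolding is_pairing_def by auto
  have "bd (I - {\<alpha>, \<beta>}) deg dm (morse_D dm D \<alpha> \<beta>) ` chains (I - {\<alpha>, \<beta>}) deg dm n
      = bd I deg dm D ` chains (I - {\<alpha>, \<beta>}) deg dm n"
    using bd_morse_eq_bd[OF assms(1,2) degs] by (rule image_cong[OF refl])
  also have "\<dots> = bd I deg dm D ` chains I deg dm n"
    using assms by (rule bd_image_chains_Diff_pairing)
  finally show ?thesis .
qed

end
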